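(* Let $\mathcal{M}=(\Sigma,\Gamma,\mathcal{H},U,M)$ be a QMM with $n=\dim\mathcal{H}$ and $\rho$ a Hermitian operator on $\mathcal{H}$. Then $\operatorname{span}\mathfrak{D}(\rho,m)\subseteq\operatorname{span}\mathfrak{D}(\rho,n^2-1)$ for every $m\in\mathbb{N}$.
   Context: A quantum Mealy machine (QMM) is a tuple $\mathcal{M}=(\Sigma,\Gamma,\mathcal{H},U,M)$ where $\Sigma,\Gamma$ are finite alphabets, $\mathcal{H}$ a finite-dimensional complex Hilbert space, $U=\{U_\sigma\}_{\sigma\in\Sigma}$ unitary operators on $\mathcal{H}$, $M=\{M_\gamma\}_{\gamma\in\Gamma}$ linear operators with $\sum_\gamma M_\gamma^\dagger M_\gamma=I$. For a word $a$, $|a|$ is its length, $a[l:r]=a[l]\cdots a[r]$ (empty if $l>r$), $U_a=U_{a[|a|]}\cdots U_{a[1]}$, $U_\epsilon=I$. A scheduler for $a\in\Sigma^*$ is a finite non-decreasing integer sequence $\mathcal{S}=(s_1\le\dots\le s_{|\mathcal{S}|})$ in $\{0,\dots,|a|\}$ (possibly empty); $\mathfrak{S}_a$ is the set of schedulers for $a$. With $s_0=0$, $s_{|\mathcal{S}|+1}=|a|$, $a_i=a[s_{i-1}+1:s_i]$. For $b\in\Gamma^{|\mathcal{S}|}$, $V_{b|a,\mathcal{S}}=U_{a_{|\mathcal{S}|+1}}M_{b_{|\mathcal{S}|}}U_{a_{|\mathcal{S}|}}\cdots M_{b_1}U_{a_1}$ and $\rho^{\mathcal{M}}_{b|a,\mathcal{S}}=V_{b|a,\mathcal{S}}\rho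 V_{b|a,\mathcal{S}}^\dagger$. For Hermitian $\rho$ and $m\in\mathbb{N}$, $\mathfrak{D}(\rho,m)=\{\rho^{\mathcal{M}}_{b|a,\mathcal{S}}:a\in\Sigma^*,\mathcal{S}\in\mathfrak{S}_a,b\in\Gamma^{|\mathcal{S}|},|a|+|\mathcal{S}|\le m\}$; spans are complex linear spans. *)

theory Defs
  imports "HOL-Analysis.Analysis"
begin

text \<open>Operators on the n-dimensional Hilbert space H = complex^'n are represented
 as complex n x n matrices (type complex^'n^'n), with n = CARD('n).\<close>

definition adj :: "complex^'n^'m \<Rightarrow> complex^'m^'n" where
  "adj A = (\<chi> i j. cnj (A $ j $ i))"

definition cscale :: "complex \<Rightarrow> complex^'n^'m \<Rightarrow> complex^'n^'m" where
  "cscale c A = (\<chi> i j. c * A $ i $ j)"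

definition cspan :: "(complex^'n^'m) set \<Rightarrow> (complex^'n^'m) set" where
  "cspan S = module.span cscale S"

definition unitary :: "complex^'n^'n \<Rightarrow> bool" where
  "unitary A \<longleftrightarrow> adj A ** A = mat 1 \<and> A ** adj A = mat 1"

definition hermitian :: "complex^'n^'n \<Rightarrow> bool" where
  "hermitian A \<longleftrightarrow> adj A = A"

definition is_QMM :: "('s::finite \<Rightarrow> complex^'n^'n) \<Rightarrow> ('g::finite \<Rightarrow> complex^'n^'n) \<Rightarrow> bool" where
  "is_QMM U M \<longleftrightarrow> (\<forall>\<sigma>. unitary (U \<sigma>)) \<and> (\<Sum>\<gamma>\<in>UNIV. adj (M \<gamma>) ** M \<gamma>) = mat 1"

fun Uw :: "('s \<Rightarrow> complex^'n^'n) \<Rightarrow> 's list \<Rightarrow> complex^'n^'n" where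
  "Uw U [] = mat 1"
| "Uw U (x # w) = Uw U w ** U x"

text \<open>Vseg U M a p [(s_i,b_i),...,(s_k,b_k)] with p = s_{i-1} equals
  U_{a_{k+1}} M_{b_k} U_{a_k} ... M_{b_i} U_{a_i}, where a_j = a[s_{j-1}+1 : s_j]
  and s_{k+1} = |a|.\<close>
fun Vseg :: "('s \<Rightarrow> complex^'n^'n) \<Rightarrow> ('g \<Rightarrow> complex^'n^'n) \<Rightarrow> 's list \<Rightarrow> nat
      \<Rightarrow> (nat \<times> 'g) list \<Rightarrow> complex^'n^'n" where
  "Vseg U M a p [] = Uw U (drop p a)"
| "Vseg U M a p ((s, g) # sb) = Vseg U M a s sb ** M g ** Uw U (take (s - p) (drop p a))"

definition Vop :: "('s \<Rightarrow> complex^'n^'n) \<Rightarrow> ('g \<Rightarrow> complex^'n^'n) \<Rightarrow> 's list \<Rightarrow> nat list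
      \<Rightarrow> 'g list \<Rightarrow> complex^'n^'n" where
  "Vop U M a S b = Vseg U M a 0 (zip S b)"

definition is_scheduler :: "'s list \<Rightarrow> nat list \<Rightarrow> bool" where
  "is_scheduler a S \<longleftrightarrow> sorted S \<and> (\<forall>s\<in>set S. s \<le> length a)"

definition Dset :: "('s \<Rightarrow> complex^'n^'n) \<Rightarrow> ('g \<Rightarrow> complex^'n^'n) \<Rightarrow> complex^'n^'n
      \<Rightarrow> nat \<Rightarrow> (complex^'n^'n) set" where
  "Dset U M \<rho> m = {Vop U M a S b ** \<rho> ** adj (Vop U M a S b) | a S b.
       is_scheduler a S \<and> length b = length S \<and> length a + length S \<le> m}"

end

theory Submission
  imports Defs
begin

text \<open>Writing a scheduled run as a word over \<open>\<Sigma> + \<Gamma>\<close>, the set D(\<rho>, m) consists of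
  the images of \<open>\<rho>\<close> under the linear maps \<open>X \<mapsto> A X A\<^sup>\<dagger>\<close> (one per letter) composed
  along words of length at most m. The spans W(k) of these sets increase with k, and W(k+1)
  is spanned by \<open>\<rho>\<close> together with the images of W(k), so once W(k) = W(k+1) the chain is
  constant. A chain of subspaces of the n^2-dimensional operator space starting at
  dimension at least one can grow strictly at most n^2 - 1 times.\<close>

primrec orbit_upto :: "('z \<Rightarrow> 'b \<Rightarrow> 'b) \<Rightarrow> 'b \<Rightarrow> nat \<Rightarrow> 'b set" where
  "orbit_upto f x 0 = {x}"
| "orbit_upto f x (Suc k) = insert x (\<Union>z. f z ` orbit_upto f x k)"

lemma orbit_upto_eq_fold: "orbit_upto f x k = {fold f w x | w. length w \<le> k}"
proof (induction k)
  case 0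
  then show ?case by auto
next
  case (Suc k)
  show ?case
  proof (intro equalityI subsetI)
    fix y assume "y \<in> orbit_upto f x (Suc k)"
    then consider "y = x" | z w where "y = f z (fold f w x)" "length w \<le> k"
      using Suc.IH by auto
    then show "y \<in> {fold f w x | w. length w \<le> Suc k}"
    proof cases
      case 1
      then show ?thesis by (auto intro: exI[of _ "[]"])
    next
      case (2 z w)
      then show ?thesis by (auto intro!: exI[of _ "w @ [z]"])
    qed
  next
    fix y assume "y \<in> {fold f w x | w. length w \<le> Suc k}"
    then obtain w where y: "y = fold f w x" "length w \<le> Suc k" by blast
    show "y \<in> orbit_upto f x (Suc k)"
    proof (cases w rule: rev_exhaust)
      case Nil
      then show ?thesis using y by simp
    next
      case (snoc v z)
      then show ?thesis using y Suc.IH by auto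
    qed
  qed
qed

lemma orbit_upto_mono: "k \<le> l \<Longrightarrow> orbit_upto f x k \<subseteq> orbit_upto f x l"
  unfolding orbit_upto_eq_fold by auto

context module
begin

lemma orbit_upto_zero:
  assumes "\<And>z. module_hom scale scale (f z)"
  shows "orbit_upto f 0 k = {0}"
  by (induction k) (simp_all add: module_hom.zero[OF assms])

lemma span_orbit_upto_stable:
  assumes lin: "\<And>z. module_hom scale scale (f z)"
    and eq: "span (orbit_upto f x k) = span (orbit_upto f x (Suc k))"
  shows "span (orbit_upto f x (Suc k)) = span (orbit_upto f x (Suc (Suc k)))"
proof
  show "span (orbit_upto f x (Suc k)) \<subseteq> span (orbit_upto f x (Suc (Suc k)))"
    by (intro span_mono orbit_upto_mono) simp
next
  have "f z ` orbit_upto f x (Suc k) \<subseteq> span (orbit_upto f x (Suc k))" for z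
  proof -
    have "f z ` orbit_upto f x (Suc k) \<subseteq> f z ` span (orbit_upto f x k)"
      using eq span_superset by blast
    also have "\<dots> = span (f z ` orbit_upto f x k)"
      by (rule module_hom.span_image[OF lin, symmetric])
    also have "\<dots> \<subseteq> span (orbit_upto f x (Suc k))"
      by (intro span_mono) auto
    finally show ?thesis .
  qed
  moreover have "x \<in> span (orbit_upto f x (Suc k))"
    by (rule span_base) simp
  ultimately have "orbit_upto f x (Suc (Suc k)) \<subseteq> span (orbit_upto f x (Suc k))"
    unfolding orbit_upto.simps(2)[of f x "Suc k"] by blast
  then show "span (orbit_upto f x (Suc (Suc k))) \<subseteq> span (orbit_upto f x (Suc k))"
    by (rule span_minimal) (rule subspace_span)
qed

lemma span_orbit_upto_stable_from:
  assumes lin: "\<And>z. module_hom scale scale (f z)"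
    and eq: "span (orbit_upto f x j) = span (orbit_upto f x (Suc j))"
  shows "span (orbit_upto f x (j + i)) = span (orbit_upto f x j)"
proof -
  have step: "span (orbit_upto f x (j + i)) = span (orbit_upto f x (Suc (j + i)))" for i
  proof (induction i)
    case (Suc i)
    show ?case using span_orbit_upto_stable[OF lin Suc.IH] by simp
  qed (use eq in simp)
  show ?thesis
    by (induction i) (use step in auto)
qed

end

lemma (in finite_dimensional_vector_space) span_orbit_upto_subset_dimension:
  assumes lin: "\<And>z. Vector_Spaces.linear scale scale (f z)"
  shows "span (orbit_upto f x m) \<subseteq> span (orbit_upto f x (dimension - 1))"
proof (cases "x = 0")
  case True
  then show ?thesis using orbit_upto_zero[of f, OF lin] by simp
next
  case False
  let ?W = "\<lambda>k. span (orbit_upto f x k)"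
  have mono: "?W k \<subseteq> ?W l" if "k \<le> l" for k l
    using that by (intro span_mono orbit_upto_mono)
  show ?thesis
  proof (cases "\<exists>j < dimension. ?W j = ?W (Suc j)")
    case True
    then obtain j where j: "j < dimension" "?W j = ?W (Suc j)" by blast
    show ?thesis
    proof (cases "m \<le> dimension - 1")
      case False
      then have "?W m = ?W j"
        using span_orbit_upto_stable_from[OF lin j(2), of "m - j"] j(1) by simp
      then show ?thesis using mono[of j "dimension - 1"] j(1) by simp
    qed (rule mono)
  next
    case False
    have dim_grows: "Suc j \<le> dim (orbit_upto f x j)" if "j \<le> dimension" for j
      using that
    proof (induction j)
      case 0
      then show ?case using \<open>x \<noteq> 0\<close> by simp
    next
      case (Suc j)
      then have "j < dimension" by simp
      then have "?W j \<noteq> ?W (Suc j)" using False by blast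
      with mono[of j "Suc j"] have "?W j \<subset> ?W (Suc j)" by (intro psubsetI) simp_all
      then have "dim (orbit_upto f x j) < dim (orbit_upto f x (Suc j))" by (rule dim_psubset)
      with Suc.IH Suc.prems show ?case by linarith
    qed
    have "dim (orbit_upto f x dimension) \<le> dimension" by (rule dim_subset_UNIV)
    with dim_grows[of dimension] show ?thesis by linarith
  qed
qed

lemma vector_space_cscale: "vector_space (cscale :: complex \<Rightarrow> complex^'n^'m \<Rightarrow> _)"
  by unfold_locales (simp_all add: cscale_def vec_eq_iff algebra_simps)

global_interpretation cmat: vector_space "cscale :: complex \<Rightarrow> complex^'n^'m \<Rightarrow> _"
  by (rule vector_space_cscale)

lemma matrix_add_rdistrib: "(B + C) ** (A :: 'a::semiring_1^'n^'m) = B ** A + C ** A"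
  by (simp add: matrix_matrix_mult_def vec_eq_iff sum.distrib algebra_simps)

lemma matrix_mul_cscale_right: "(A :: complex^'n^'m) ** cscale c X = cscale c (A ** X)"
  by (simp add: matrix_matrix_mult_def cscale_def vec_eq_iff sum_distrib_left algebra_simps)

lemma matrix_mul_cscale_left: "cscale c (X :: complex^'n^'m) ** A = cscale c (X ** A)"
  by (simp add: matrix_matrix_mult_def cscale_def vec_eq_iff sum_distrib_left algebra_simps)

lemma adj_matrix_mul: "adj ((A :: complex^'n^'m) ** B) = adj B ** adj A"
  by (simp add: matrix_matrix_mult_def adj_def vec_eq_iff mult.commute)

lemma adj_mat_1: "adj (mat 1 :: complex^'n^'n) = mat 1"
  by (simp add: adj_def mat_def vec_eq_iff)

definition matrix_unit :: "'m \<Rightarrow> 'n \<Rightarrow> complex^'n^'m" where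
  "matrix_unit i j = (\<chi> a b. if a = i \<and> b = j then 1 else 0)"

lemma matrix_eq_sum_matrix_units:
  "(A :: complex^'n::finite^'m::finite) = (\<Sum>(i, j)\<in>UNIV. cscale (A $ i $ j) (matrix_unit i j))"
proof -
  have "(\<Sum>(i, j)\<in>UNIV. A $ i $ j * (if a = i \<and> b = j then 1 else 0))
      = (\<Sum>p\<in>UNIV. if p = (a, b) then A $ a $ b else 0)" for a b
    by (rule sum.cong) (auto split: if_splits)
  then show ?thesis
    by (simp add: vec_eq_iff cscale_def matrix_unit_def case_prod_beta)
qed

lemma span_matrix_units: "cmat.span (range (case_prod matrix_unit)) = UNIV"
proof -
  have "A \<in> cmat.span (range (case_prod matrix_unit))" for A :: "complex^'n::finite^'m::finite"
    by (subst matrix_eq_sum_matrix_units[of A], intro cmat.span_sum)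
      (auto intro!: cmat.span_scale[OF cmat.span_base])
  then show ?thesis by blast
qed

lemma finite_dimensional_matrix_space:
  obtains B :: "(complex^'n::finite^'m::finite) set"
  where "finite_dimensional_vector_space cscale B" and "card B \<le> CARD('m) * CARD('n)"
proof -
  let ?E = "range (case_prod matrix_unit) :: (complex^'n^'m) set"
  obtain B where B: "B \<subseteq> ?E" "cmat.independent B" "?E \<subseteq> cmat.span B"
    using cmat.maximal_independent_subset by blast
  have "finite B" using B(1) by (rule finite_subset) simp
  moreover have "cmat.span B = UNIV"
    using cmat.span_minimal[OF B(3) cmat.subspace_span] span_matrix_units by blast
  ultimately have "finite_dimensional_vector_space cscale B"
    using B(2) by unfold_locales auto
  moreover have "card B \<le> CARD('m) * CARD('n)"
  proof -
    have "card B \<le> card ?E" using B(1) by (intro card_mono) auto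
    also have "\<dots> \<le> card (UNIV :: ('m \<times> 'n) set)" by (rule card_image_le) simp
    finally show ?thesis by (simp add: card_cartesian_product)
  qed
  ultimately show thesis by (rule that)
qed

definition sandwich :: "complex^'n^'m \<Rightarrow> complex^'n^'n \<Rightarrow> complex^'m^'m" where
  "sandwich A X = A ** X ** adj A"

lemma linear_sandwich: "Vector_Spaces.linear cscale cscale (sandwich A)"
  by unfold_locales
    (simp_all add: sandwich_def matrix_add_ldistrib matrix_add_rdistrib
      matrix_mul_cscale_right matrix_mul_cscale_left)

lemma sandwich_matrix_mul: "sandwich (A ** B) X = sandwich A (sandwich B X)"
  by (simp add: sandwich_def adj_matrix_mul matrix_mul_assoc)

fun word_op :: "('s \<Rightarrow> complex^'n^'n) \<Rightarrow> ('g \<Rightarrow> complex^'n^'n) \<Rightarrow> ('s + 'g) list \<Rightarrow> complex^'n^'n"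
  where
    "word_op U M [] = mat 1"
  | "word_op U M (z # w) = word_op U M w ** case_sum U M z"

lemma word_op_append: "word_op U M (v @ w) = word_op U M w ** word_op U M v"
  by (induction v) (simp_all add: matrix_mul_assoc)

lemma Uw_eq_word_op: "Uw U a = word_op U M (map Inl a)"
  by (induction a) simp_all

lemma Uw_snoc: "Uw U (a @ [\<sigma>]) = U \<sigma> ** Uw U a"
  by (induction a) (simp_all add: matrix_mul_assoc)

lemma sandwich_mat_1: "sandwich (mat 1) X = X"
  by (simp add: sandwich_def adj_mat_1)

lemma sandwich_word_op:
  "sandwich (word_op U M w) X = fold (\<lambda>z. sandwich (case_sum U M z)) w X"
  by (induction w arbitrary: X) (simp_all add: sandwich_mat_1 sandwich_matrix_mul)

fun schedule_word :: "'s list \<Rightarrow> nat \<Rightarrow> (nat \<times> 'g) list \<Rightarrow> ('s + 'g) list" where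
  "schedule_word a p [] = map Inl (drop p a)"
| "schedule_word a p ((s, \<gamma>) # sb) =
     map Inl (take (s - p) (drop p a)) @ Inr \<gamma> # schedule_word a s sb"

lemma Vseg_eq_word_op: "Vseg U M a p sb = word_op U M (schedule_word a p sb)"
  by (induction a p sb rule: schedule_word.induct)
    (simp_all add: Uw_eq_word_op[of U _ M] word_op_append matrix_mul_assoc)

lemma length_schedule_word:
  assumes "sorted (p # map fst sb)" and "\<forall>s\<in>fst ` set sb. s \<le> length a" and "p \<le> length a"
  shows "length (schedule_word a p sb) = length a - p + length sb"
  using assms by (induction a p sb rule: schedule_word.induct) auto

lemma Vseg_append_letter:
  "\<forall>s\<in>fst ` set sb. s \<le> length a \<Longrightarrow> p \<le> length a \<Longrightarrow>
   Vseg U M (a @ [\<sigma>]) p sb = U \<sigma> ** Vseg U M a p sb"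
  by (induction U M a p sb rule: Vseg.induct) (auto simp: Uw_snoc matrix_mul_assoc)

lemma Vseg_append_measurement:
  "\<forall>s\<in>fst ` set sb. s \<le> length a \<Longrightarrow> p \<le> length a \<Longrightarrow>
   Vseg U M a p (sb @ [(length a, \<gamma>)]) = M \<gamma> ** Vseg U M a p sb"
  by (induction U M a p sb rule: Vseg.induct) (auto simp: matrix_mul_assoc)

lemma word_op_eq_Vop:
  "\<exists>a S b. is_scheduler a S \<and> length b = length S \<and> length a + length S = length w
     \<and> Vop U M a S b = word_op U M w"
proof (induction w rule: rev_induct)
  case Nil
  show ?case by (intro exI[of _ "[]"]) (simp add: is_scheduler_def Vop_def)
next
  case (snoc z w)
  then obtain a S b where IH: "is_scheduler a S" "length b = length S"
    "length a + length S = length w" "Vop U M a S b = word_op U M w" by blast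
  have bounds: "\<forall>s\<in>fst ` set (zip S b). s \<le> length a"
    using IH(1) by (auto simp: is_scheduler_def dest: set_zip_leftD)
  show ?case
  proof (cases z)
    case (Inl \<sigma>)
    with IH bounds show ?thesis
      by (intro exI[of _ "a @ [\<sigma>]"] exI[of _ S] exI[of _ b])
        (auto simp: is_scheduler_def Vop_def Vseg_append_letter word_op_append)
  next
    case (Inr \<gamma>)
    with IH bounds show ?thesis
      by (intro exI[of _ a] exI[of _ "S @ [length a]"] exI[of _ "b @ [\<gamma>]"])
        (auto simp: is_scheduler_def Vop_def Vseg_append_measurement word_op_append sorted_append)
  qed
qed

lemma Dset_eq_sandwich_words:
  "Dset U M \<rho> m = {sandwich (word_op U M w) \<rho> | w. length w \<le> m}"
proof (intro equalityI subsetI)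
  fix X assume "X \<in> Dset U M \<rho> m"
  then obtain a S b where X: "X = sandwich (Vop U M a S b) \<rho>"
    and S: "is_scheduler a S" "length b = length S" "length a + length S \<le> m"
    unfolding Dset_def sandwich_def by blast
  let ?w = "schedule_word a 0 (zip S b)"
  have "length ?w = length a + length S"
    using S by (subst length_schedule_word) (auto simp: is_scheduler_def dest: set_zip_leftD)
  moreover have "Vop U M a S b = word_op U M ?w" by (simp add: Vop_def Vseg_eq_word_op)
  ultimately show "X \<in> {sandwich (word_op U M w) \<rho> | w. length w \<le> m}"
    using X S(3) by auto
next
  fix X assume "X \<in> {sandwich (word_op U M w) \<rho> | w. length w \<le> m}"
  then obtain w where X: "X = sandwich (word_op U M w) \<rho>" and w: "length w \<le> m" by blast
  obtain a S b where "is_scheduler a S" "length b = length S" "length a + length S = length w"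
    and "Vop U M a S b = word_op U M w"
    using word_op_eq_Vop by blast
  with X w show "X \<in> Dset U M \<rho> m"
    unfolding Dset_def sandwich_def by (intro CollectI exI[of _ a] exI[of _ S] exI[of _ b]) simp
qed

lemma Dset_eq_orbit_upto: "Dset U M \<rho> m = orbit_upto (\<lambda>z. sandwich (case_sum U M z)) \<rho> m"
  by (simp add: Dset_eq_sandwich_words orbit_upto_eq_fold sandwich_word_op)

theorem propositionA2:
  fixes U :: "'s::finite \<Rightarrow> complex^'n^'n" and M :: "'g::finite \<Rightarrow> complex^'n^'n"
    and \<rho> :: "complex^'n^'n"
  assumes "is_QMM U M" and "hermitian \<rho>"
  shows "\<forall>m::nat. cspan (Dset U M \<rho> m) \<subseteq> cspan (Dset U M \<rho> (CARD('n)^2 - 1))"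
proof
  fix m
  obtain B :: "(complex^'n^'n) set"
    where fd: "finite_dimensional_vector_space cscale B" and card: "card B \<le> CARD('n) * CARD('n)"
    by (rule finite_dimensional_matrix_space)
  interpret fd: finite_dimensional_vector_space cscale B by (rule fd)
  let ?f = "\<lambda>z. sandwich (case_sum U M z)"
  have "cspan (Dset U M \<rho> m) \<subseteq> cspan (Dset U M \<rho> (fd.dimension - 1))"
    using fd.span_orbit_upto_subset_dimension[of ?f, OF linear_sandwich]
    by (simp add: cspan_def Dset_eq_orbit_upto)
  also have "\<dots> \<subseteq> cspan (Dset U M \<rho> (CARD('n)^2 - 1))"
    using card unfolding cspan_def Dset_eq_orbit_upto fd.dimension_def
    by (intro cmat.span_mono orbit_upto_mono) (simp add: power2_eq_square)
  finally show "cspan (Dset U M \<rho> m) \<subseteq> cspan (Dset U M \<rho> (CARD('n)^2 - 1))" .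
qed

end
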